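(* For every integer $\alpha\ge2$ and every integer $k>3$, $$2k^2-2k\le N_\alpha(k,k)\le (k^3-k^2+k)\binom{k}{2}.$$
   Context: A $k$-power is a word $u^k$ ($k$ concatenated copies of $u$) for a nonempty word $u$. A $k$-anti-power is a word $w=w_1\cdots w_k$ with $|w_1|=\cdots=|w_k|$ and $w_1,\dots,w_k$ pairwise distinct. $N_\alpha(k,k)$ is the smallest positive integer $N$ such that every word of length $N$ over an alphabet of size $\alpha$ contains a factor (contiguous subword) that is a $k$-power or a $k$-anti-power. *)

theory Defs
  imports Main
begin

definition is_factor :: "'a list \<Rightarrow> 'a list \<Rightarrow> bool" where
  "is_factor v w \<longleftrightarrow> (\<exists>x y. w = x @ v @ y)"

definition is_k_power :: "nat \<Rightarrow> 'a list \<Rightarrow> bool" where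
  "is_k_power k w \<longleftrightarrow> (\<exists>u. u \<noteq> [] \<and> w = concat (replicate k u))"

definition is_k_anti_power :: "nat \<Rightarrow> 'a list \<Rightarrow> bool" where
  "is_k_anti_power k w \<longleftrightarrow> (\<exists>m. length w = k * m \<and>
     (\<forall>i<k. \<forall>j<k. i \<noteq> j \<longrightarrow> take m (drop (i*m) w) \<noteq> take m (drop (j*m) w)))"

definition good_length :: "nat \<Rightarrow> nat \<Rightarrow> nat \<Rightarrow> bool" where
  "good_length alpha k N \<longleftrightarrow> (\<forall>w::nat list. length w = N \<longrightarrow> set w \<subseteq> {0..<alpha} \<longrightarrow>
     (\<exists>v. is_factor v w \<and> (is_k_power k v \<or> is_k_anti_power k v)))"

definition N_alpha :: "nat \<Rightarrow> nat \<Rightarrow> nat" where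
  "N_alpha alpha k = (LEAST N. N > 0 \<and> good_length alpha k N)"

end

theory Submission
  imports Defs
begin

text \<open>Upper bound: let \<open>c = k choose 2\<close> and \<open>M = c (k\<^sup>2 - k)\<close>. In a word of length
  \<open>k (M + c)\<close> none of the prefixes of length \<open>k m\<close>, \<open>M \<le> m \<le> M + c\<close>, is a \<open>k\<close>-anti-power, so
  each has two equal blocks \<open>i < j\<close> of length \<open>m\<close>. Two of these \<open>c + 1\<close> lengths, \<open>m < m'\<close>, give
  the same pair \<open>(i, j)\<close>, and overlaying the two coincidences shows that the word has period
  \<open>(j - i) (m' - m)\<close> on a window of \<open>k\<close> periods: a \<open>k\<close>-power.

  Lower bound: the binary word of length \<open>2k\<^sup>2 - 2k - 1\<close> whose ones are \<open>k\<close> apart except for two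
  gaps of \<open>k - 1\<close> at its centre avoids both. A \<open>k\<close>-power would force \<open>k\<close> equally spaced ones,
  which the irregular gaps forbid. Among \<open>k\<close> consecutive blocks of length \<open>m\<close> two always agree:
  for \<open>m < k - 1\<close> by pigeonhole on the position of their at most one 1, for \<open>m = k - 1\<close> at the
  centre, and for \<open>m \<ge> k\<close> after a shift by \<open>d m\<close> with \<open>d m \<equiv> 0\<close> or \<open>d m \<equiv> -2 (mod k)\<close>.\<close>

section \<open>Powers and anti-powers of lists\<close>

lemma length_concat_replicate [simp]: "length (concat (replicate k u)) = k * length u"
  by (induction k) auto

lemma nth_concat_replicate:
  assumes "q < k * length u"
  shows "concat (replicate k u) ! q = u ! (q mod length u)"
  using assms
proof (induction k arbitrary: q)
  case (Suc k)
  show ?case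
  proof (cases "q < length u")
    case False
    then have "concat (replicate k u) ! (q - length u) = u ! ((q - length u) mod length u)"
      using Suc by simp
    with False show ?thesis by (simp add: nth_append le_mod_geq)
  qed (simp add: nth_append)
qed simp

lemma periodic_nth_mod:
  fixes f :: "nat \<Rightarrow> 'a"
  assumes per: "\<And>t. t + p < L \<Longrightarrow> f (t + p) = f t" and "0 < p" and "q < L"
  shows "f q = f (q mod p)"
  using \<open>q < L\<close>
proof (induction q rule: less_induct)
  case (less q)
  show ?case
  proof (cases "q < p")
    case False
    then have "f q = f (q - p)" using per[of "q - p"] less.prems by simp
    also have "\<dots> = f ((q - p) mod p)" using less \<open>0 < p\<close> False by simp
    finally show ?thesis using False by (simp add: le_mod_geq)
  qed simp
qed

lemma is_factor_take_drop: "is_factor (take n (drop s w)) w"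
  unfolding is_factor_def by (metis append_take_drop_id)

lemma is_factor_nth:
  assumes "is_factor v w"
  obtains s where "s + length v \<le> length w" "\<And>q. q < length v \<Longrightarrow> v ! q = w ! (s + q)"
proof -
  obtain x y where "w = x @ v @ y" using assms unfolding is_factor_def by blast
  then show thesis by (intro that[of "length x"]) (auto simp: nth_append)
qed

lemma is_k_power_iff_periodic:
  assumes "0 < k"
  shows "is_k_power k v \<longleftrightarrow> (\<exists>p>0. length v = k * p \<and> (\<forall>q<length v. v ! q = v ! (q mod p)))"
proof
  assume "is_k_power k v"
  then obtain u where "u \<noteq> []" and v: "v = concat (replicate k u)"
    unfolding is_k_power_def by blast
  have "v ! q = v ! (q mod length u)" if "q < length v" for q
  proof -
    have "q mod length u \<le> q" by (rule mod_less_eq_dividend)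
    then have "q mod length u < length v" using that by linarith
    then show ?thesis using that v by (simp add: nth_concat_replicate)
  qed
  moreover have "length v = k * length u" "0 < length u" using v \<open>u \<noteq> []\<close> by simp_all
  ultimately show "\<exists>p>0. length v = k * p \<and> (\<forall>q<length v. v ! q = v ! (q mod p))"
    by blast
next
  assume "\<exists>p>0. length v = k * p \<and> (\<forall>q<length v. v ! q = v ! (q mod p))"
  then obtain p where "0 < p" and len: "length v = k * p"
    and per: "\<And>q. q < length v \<Longrightarrow> v ! q = v ! (q mod p)" by blast
  define u where "u = take p v"
  have "p \<le> length v" using len assms by simp
  then have lu: "length u = p" by (simp add: u_def)
  have "v = concat (replicate k u)"
  proof (rule nth_equalityI)
    fix q assume q: "q < length v"
    have "q mod p < p" using \<open>0 < p\<close> by simp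
    then have "concat (replicate k u) ! q = v ! (q mod p)"
      using q len lu by (simp add: nth_concat_replicate u_def)
    then show "v ! q = concat (replicate k u) ! q" using per[OF q] by simp
  qed (simp add: len lu)
  then show "is_k_power k v" unfolding is_k_power_def using lu \<open>0 < p\<close> by auto
qed

lemma is_k_anti_power_iff_blocks:
  "is_k_anti_power k v \<longleftrightarrow>
     (\<exists>m. length v = k * m \<and> (\<forall>i j. i < j \<longrightarrow> j < k \<longrightarrow> (\<exists>t<m. v ! (i*m + t) \<noteq> v ! (j*m + t))))"
proof -
  have block_eq_iff:
      "take m (drop (i*m) v) = take m (drop (j*m) v) \<longleftrightarrow> (\<forall>t<m. v ! (i*m + t) = v ! (j*m + t))"
    if "length v = k * m" "i < k" "j < k" for m i j
  proof -
    have "Suc i * m \<le> k * m" "Suc j * m \<le> k * m"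
      using that mult_le_mono1[of "Suc i" k m] mult_le_mono1[of "Suc j" k m] by simp_all
    then have "length (take m (drop (i*m) v)) = m" "length (take m (drop (j*m) v)) = m"
      using that by simp_all
    then show ?thesis by (simp add: list_eq_iff_nth_eq)
  qed
  show ?thesis
    unfolding is_k_anti_power_def
  proof (intro ex_cong1 conj_cong refl)
    fix m assume len: "length v = k * m"
    let ?B = "\<lambda>i. take m (drop (i*m) v)"
    have "(\<forall>i<k. \<forall>j<k. i \<noteq> j \<longrightarrow> ?B i \<noteq> ?B j) \<longleftrightarrow> (\<forall>i j. i < j \<longrightarrow> j < k \<longrightarrow> ?B i \<noteq> ?B j)"
    proof (intro iffI allI impI)
      fix i j assume "\<forall>i<k. \<forall>j<k. i \<noteq> j \<longrightarrow> ?B i \<noteq> ?B j" "i < j" "j < k"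
      then show "?B i \<noteq> ?B j" by simp
    next
      fix i j assume B: "\<forall>i j. i < j \<longrightarrow> j < k \<longrightarrow> ?B i \<noteq> ?B j" and "i < k" "j < k" "i \<noteq> j"
      show "?B i \<noteq> ?B j"
      proof (cases "i < j")
        case False
        then have "j < i" using \<open>i \<noteq> j\<close> by simp
        then show ?thesis using B \<open>i < k\<close> by metis
      qed (use B \<open>j < k\<close> in blast)
    qed
    also have "\<dots> \<longleftrightarrow> (\<forall>i j. i < j \<longrightarrow> j < k \<longrightarrow> (\<exists>t<m. v ! (i*m + t) \<noteq> v ! (j*m + t)))"
      using block_eq_iff[OF len] by (meson order.strict_trans)
    finally show "(\<forall>i<k. \<forall>j<k. i \<noteq> j \<longrightarrow> ?B i \<noteq> ?B j) \<longleftrightarrow> \<dots>" .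
  qed
qed

section \<open>The upper bound\<close>

lemma k_power_factor_of_periodic_window:
  assumes "0 < k" "0 < p" and win: "a + k * p \<le> length w"
    and per: "\<And>t. t + p < k * p \<Longrightarrow> w ! (a + t + p) = w ! (a + t)"
  shows "\<exists>v. is_factor v w \<and> is_k_power k v"
proof -
  define v where "v = take (k * p) (drop a w)"
  have len: "length v = k * p" using win by (simp add: v_def)
  have "v ! q = v ! (q mod p)" if "q < length v" for q
  proof -
    have "(\<lambda>t. w ! (a + t)) q = (\<lambda>t. w ! (a + t)) (q mod p)"
      by (rule periodic_nth_mod[where L = "k * p"])
        (use per \<open>0 < p\<close> that len in \<open>simp_all add: add.assoc\<close>)
    moreover have "q mod p < length v"
      using that mod_less_eq_dividend[of q p] by linarith
    ultimately show ?thesis using that len win by (simp add: v_def)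
  qed
  then have "is_k_power k v" using is_k_power_iff_periodic[OF \<open>0 < k\<close>] len \<open>0 < p\<close> by blast
  then show ?thesis using is_factor_take_drop v_def by blast
qed

lemma periodic_window_of_repeated_blocks:
  fixes f :: "nat \<Rightarrow> 'a"
  assumes "i < j" "m < m'" "0 < k"
    and room: "(m' - m) * (i + (k - 1) * (j - i)) \<le> m"
    and blocks: "\<And>t. t < m \<Longrightarrow> f (i*m + t) = f (j*m + t)"
    and blocks': "\<And>t. t < m' \<Longrightarrow> f (i*m' + t) = f (j*m' + t)"
  obtains a p where "0 < p" "a + k * p \<le> (j + 1) * m'"
    "\<And>t. t + p < k * p \<Longrightarrow> f (a + t + p) = f (a + t)"
proof -
  define e d where "e = m' - m" and "d = j - i"
  define p a where "p = d * e" and "a = j*m + i*e"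
  have m': "m' = m + e" and j: "j = i + d" and "0 < p"
    using assms by (simp_all add: e_def d_def p_def)
  have kp: "k * p = (k - 1) * p + p" using \<open>0 < k\<close> by (cases k) auto
  have "i*e + (k - 1)*p = e * (i + (k - 1) * d)" by (simp add: p_def algebra_simps)
  then have room': "i*e + (k - 1)*p \<le> m" using room[folded e_def d_def] by simp
  \<comment> \<open>The \<open>m\<close>-blocks identify \<open>a + t\<close> with \<open>i*m' + t\<close>, and the \<open>m'\<close>-blocks identify that
    with \<open>j*m' + t = a + t + p\<close>.\<close>
  have "f (a + t + p) = f (a + t)" if "t + p < k * p" for t
  proof -
    have "t < (k - 1) * p" using that kp by simp
    then have "i*e + t < m" "t < m'" using room' m' by simp_all
    then have "f (i*m + (i*e + t)) = f (j*m + (i*e + t))" "f (i*m' + t) = f (j*m' + t)"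
      using blocks blocks' by blast+
    moreover have "i*m' + t = i*m + (i*e + t)" "j*m' + t = a + t + p"
      using m' j by (simp_all add: a_def p_def algebra_simps)
    ultimately show ?thesis by (simp add: a_def add.assoc)
  qed
  moreover have "a + k * p \<le> (j + 1) * m'"
  proof -
    have "a + k * p \<le> j*m + m + d*e" using room' kp by (simp add: a_def p_def)
    also have "\<dots> \<le> j*m + j*e + m" using j by simp
    also have "\<dots> \<le> (j + 1) * m'" using m' by (simp add: algebra_simps)
    finally show ?thesis .
  qed
  ultimately show thesis using that \<open>0 < p\<close> by blast
qed

lemma ordered_pigeonhole:
  fixes D :: "'a::linorder set"
  assumes "finite P" "card P < card D" and R: "\<And>x. x \<in> D \<Longrightarrow> \<exists>y\<in>P. R x y"
  obtains x x' y where "x \<in> D" "x' \<in> D" "x < x'" "y \<in> P" "R x y" "R x' y"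
proof -
  obtain f where f: "\<And>x. x \<in> D \<Longrightarrow> f x \<in> P \<and> R x (f x)" using R by metis
  then have "card (f ` D) \<le> card P" using \<open>finite P\<close> by (intro card_mono) auto
  then have "\<not> inj_on f D" using \<open>card P < card D\<close> by (intro pigeonhole) linarith
  then obtain x x' where "x \<in> D" "x' \<in> D" "x \<noteq> x'" "f x = f x'" by (auto simp: inj_on_def)
  then show thesis using f that by (metis linorder_neq_iff)
qed

lemma card_ordered_pairs_le: "card {(i, j). i < j \<and> j < (k::nat)} \<le> k choose 2"
proof -
  let ?P = "{(i, j). i < j \<and> j < k}"
  have "inj_on (\<lambda>(i, j). {i, j}) ?P" by (auto simp: inj_on_def doubleton_eq_iff)
  then have "card ?P = card ((\<lambda>(i, j). {i, j}) ` ?P)" by (rule card_image[symmetric])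
  also have "\<dots> \<le> card {B. B \<subseteq> {..<k} \<and> card B = 2}" by (intro card_mono) auto
  also have "\<dots> = k choose 2" using n_subsets[of "{..<k}" 2] by simp
  finally show ?thesis .
qed

lemma pair_index_span_le:
  assumes "i < j" "j < (k::nat)"
  shows "i + (k - 1) * (j - i) \<le> k * k - k"
proof -
  have "k - 1 = Suc (k - 2)" using assms by simp
  then have "(k - 1) * (j - i) = (j - i) + (k - 2) * (j - i)" by simp
  then have "i + (k - 1) * (j - i) = j + (k - 2) * (j - i)" using assms by linarith
  also have "\<dots> \<le> (k - 1) + (k - 2) * (k - 1)" using assms by (intro add_mono mult_le_mono2) auto
  also have "\<dots> \<le> k * (k - 1)" using assms by (cases k) (auto simp: algebra_simps)
  finally show ?thesis by (simp add: diff_mult_distrib2)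
qed

lemma equal_blocks_of_prefix:
  assumes "k * m \<le> length w" "\<not> is_k_anti_power k (take (k * m) w)"
  obtains i j where "i < j" "j < k" "\<forall>t<m. w ! (i*m + t) = w ! (j*m + t)"
proof -
  obtain i j where ij: "i < j" "j < k"
    and blocks: "\<forall>t<m. take (k * m) w ! (i*m + t) = take (k * m) w ! (j*m + t)"
    using assms unfolding is_k_anti_power_iff_blocks by auto
  have "w ! (i*m + t) = w ! (j*m + t)" if "t < m" for t
  proof -
    have "i*m + t < k * m" "j*m + t < k * m"
      using that ij mult_le_mono1[of "Suc j" k m] mult_le_mono1[of "Suc i" k m] by auto
    then have "w ! (i*m + t) = take (k * m) w ! (i*m + t)"
      and "w ! (j*m + t) = take (k * m) w ! (j*m + t)" by simp_all
    then show ?thesis using blocks that by metis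
  qed
  then show thesis using that ij by blast
qed

lemma good_length_upper: "good_length alpha k ((k^3 - k^2 + k) * (k choose 2))"
  unfolding good_length_def
proof (intro allI impI)
  fix w :: "nat list"
  define c where "c = k choose 2"
  define M where "M = c * (k * k - k)"
  assume "length w = (k^3 - k^2 + k) * (k choose 2)"
  moreover have "k^3 - k^2 + k = k * (k * k - k) + k"
    by (simp add: power3_eq_cube power2_eq_square diff_mult_distrib2)
  moreover have "(k * x + k) * c = k * (c * x + c)" for x by (simp add: algebra_simps)
  ultimately have len: "length w = k * (M + c)" by (simp add: M_def c_def)
  show "\<exists>v. is_factor v w \<and> (is_k_power k v \<or> is_k_anti_power k v)"
  proof (rule ccontr)
    assume none: "\<not> (\<exists>v. is_factor v w \<and> (is_k_power k v \<or> is_k_anti_power k v))"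
    let ?P = "{(i, j). i < j \<and> j < k}"
    let ?R = "\<lambda>m (i, j). \<forall>t<m. w ! (i*m + t) = w ! (j*m + t)"
    have "finite ?P" by (rule finite_subset[of _ "{..<k} \<times> {..<k}"]) auto
    moreover have "card ?P < card {M..M + c}"
      using card_ordered_pairs_le[of k] by (simp add: c_def)
    moreover have "\<exists>ij\<in>?P. ?R m ij" if "m \<in> {M..M + c}" for m
    proof -
      have "k * m \<le> length w" using that len by simp
      moreover have "\<not> is_k_anti_power k (take (k * m) w)"
        using none is_factor_take_drop[of "k * m" 0 w] by auto
      ultimately obtain i j where "i < j" "j < k" "?R m (i, j)"
        by (rule equal_blocks_of_prefix) auto
      then show ?thesis by auto
    qed
    ultimately obtain m m' ij where mm': "m \<in> {M..M + c}" "m' \<in> {M..M + c}" "m < m'"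
      and "ij \<in> ?P" "?R m ij" "?R m' ij"
      by (rule ordered_pigeonhole)
    then obtain i j where ij: "i < j" "j < k" and blocks: "?R m (i, j)" "?R m' (i, j)"
      by (cases ij) auto
    have "(m' - m) * (i + (k - 1) * (j - i)) \<le> c * (k * k - k)"
      using mm' pair_index_span_le[OF ij] by (intro mult_le_mono) auto
    then have room: "(m' - m) * (i + (k - 1) * (j - i)) \<le> m" using mm' by (simp add: M_def)
    obtain a p where "0 < p" "a + k * p \<le> (j + 1) * m'"
      and per: "\<And>t. t + p < k * p \<Longrightarrow> w ! (a + t + p) = w ! (a + t)"
      by (rule periodic_window_of_repeated_blocks[OF ij(1) \<open>m < m'\<close> _ room, of "\<lambda>x. w ! x"])
        (use ij blocks in auto)
    moreover have "(j + 1) * m' \<le> length w"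
      using ij mm' len mult_le_mono[of "j + 1" k m' "M + c"] by simp
    ultimately show False
      using k_power_factor_of_periodic_window[of k p a w] per none ij by auto
  qed
qed

section \<open>The lower bound\<close>

lemma dvd_between_multiples_eq:
  fixes k y a :: nat
  assumes "k dvd y" "k * a < y" "y < k * a + 2 * k"
  shows "y = k * a + k"
proof -
  obtain q where y: "y = k * q" using assms(1) by blast
  have "k * a + 2 * k = k * (a + 2)" by (simp add: algebra_simps)
  then have "a < q" "q < a + 2" using assms(2,3) y by (metis mult_less_cancel1)+
  then have "q = a + 1" by simp
  then show ?thesis using y by simp
qed

lemma exists_multiple_between:
  fixes k a :: nat
  assumes "0 < k"
  obtains q where "a \<le> k * q" "k * q < a + k"
proof (cases "k dvd a")
  case True
  then show thesis using that[of "a div k"] assms by simp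
next
  case False
  have "k * (a div k) + a mod k = a" by (rule mult_div_mod_eq)
  moreover have "0 < a mod k" "a mod k < k" using False assms by (simp_all add: dvd_eq_mod_eq_0)
  moreover have "k * (a div k + 1) = k * (a div k) + k" by simp
  ultimately have "a \<le> k * (a div k + 1)" "k * (a div k + 1) < a + k" by linarith+
  then show thesis by (rule that)
qed

lemma exists_crossing_index:
  fixes f :: "nat \<Rightarrow> nat"
  assumes "f 0 \<le> y" "y < f n"
  shows "\<exists>i<n. f i \<le> y \<and> y < f (Suc i)"
  using assms
proof (induction n)
  case (Suc n)
  then show ?case by (cases "y < f n") (auto intro: less_SucI)
qed simp

lemma exists_mult_plus_two_dvd:
  fixes k m :: nat
  assumes "gcd m k dvd 2" "0 < k"
  obtains d where "d < k" "k dvd d * m + 2"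
proof -
  obtain h where h: "2 = gcd m k * h" using assms(1) by blast
  obtain u v :: int where uv: "u * int m + v * int k = int (gcd m k)"
    using bezout_int[of "int m" "int k"] by auto
  define A where "A = - (int h * u)"
  define d where "d = nat (A mod int k)"
  have "0 \<le> A mod int k" "A mod int k < int k" using assms(2) by simp_all
  then have d: "int d = A - int k * (A div int k)" "d < k"
    by (simp_all add: d_def minus_div_mult_eq_mod[symmetric] mult.commute)
  have "int d * int m + 2 = int k * (int h * v - A div int k * int m)"
    using d(1) uv arg_cong[OF h, of int] by (simp add: A_def) algebra
  then have "k dvd d * m + 2"
    by (metis dvd_triv_left of_nat_add of_nat_dvd_iff of_nat_mult of_nat_numeral)
  then show thesis using d(2) that by blast
qed

lemma exists_block_shift:
  fixes k m :: nat
  assumes "4 \<le> k" "k \<le> m" "m + 3 \<le> 2 * k"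
  obtains d where "k dvd d * m" "1 \<le> d" "2 * d + 2 \<le> k"
    | d where "k dvd d * m + 2" "2 \<le> d" "d < k"
proof (cases "3 \<le> gcd m k")
  case True
  define d where "d = k div gcd m k"
  have k: "k = gcd m k * d" by (simp add: d_def)
  then have "d * m = k * (m div gcd m k)"
    by (metis dvd_div_mult_self gcd_dvd1 mult.assoc mult.commute)
  then have "k dvd d * m" by simp
  moreover have "1 \<le> d" using k assms(1) by (cases d) auto
  moreover have "2 * d + 2 \<le> k"
  proof (cases "d = 1")
    case False
    then have "2 * d + 2 \<le> 3 * d" using \<open>1 \<le> d\<close> by simp
    also have "\<dots> \<le> k" using True k mult_le_mono1[of 3 "gcd m k" d] by simp
    finally show ?thesis .
  qed (use assms(1) in simp)
  ultimately show thesis using that(1) by simp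
next
  case False
  moreover have "0 < gcd m k" using assms(1) by simp
  ultimately have "gcd m k = 1 \<or> gcd m k = 2" by linarith
  then have "gcd m k dvd 2" by auto
  then obtain d where "d < k" "k dvd d * m + 2"
    using exists_mult_plus_two_dvd assms(1) by (metis not_numeral_le_zero not_gr0)
  moreover have "d \<noteq> 0"
  proof
    assume "d = 0"
    then have "k dvd 2" using \<open>k dvd d * m + 2\<close> by (metis add_0 mult_0)
    then have "k \<le> 2" by (rule dvd_imp_le) simp
    then show False using assms(1) by simp
  qed
  moreover have "d \<noteq> 1"
  proof
    assume "d = 1"
    then have "m + 2 = k + k"
      using dvd_between_multiples_eq[of k "m + 2" 1] \<open>k dvd d * m + 2\<close> assms by simp
    then show False using assms(3) by simp
  qed
  ultimately show thesis using that(2) by simp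
qed

lemma exists_straddling_pair:
  fixes c d k :: nat
  assumes "1 \<le> c" "c + 2 \<le> k" "2 \<le> d" "d < k"
  obtains r where "r + 1 \<le> c" "c + 1 \<le> r + d" "r + d < k"
proof (cases "c - 1 + d \<le> k - 1")
  case True
  then show thesis using that[of "c - 1"] assms by simp
next
  case False
  then show thesis using that[of "k - 1 - d"] assms by simp
qed

lemma exists_block_index:
  fixes m s x :: nat
  assumes "0 < m" "s \<le> x"
  obtains c where "s + c * m \<le> x" "x < s + c * m + m"
proof
  have "(x - s) div m * m + (x - s) mod m = x - s" by (rule div_mult_mod_eq)
  moreover have "(x - s) mod m < m" using assms(1) by simp
  ultimately show "s + (x - s) div m * m \<le> x" "x < s + (x - s) div m * m + m"
    using assms(2) by linarith+
qed

lemma mult_eq_mult_pred_plus: "0 < n \<Longrightarrow> k * n = k * (n - 1) + (k::nat)"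
  by (cases n) simp_all

definition centre :: "nat \<Rightarrow> nat" where "centre k = k * k - k - 1"

text \<open>On the positions \<open>0..2 * centre k\<close> this is the palindrome
  \<open>(1 0\<^bsup>k-1\<^esup>)\<^bsup>k-2\<^esup> 1 0\<^bsup>k-2\<^esup> 1 0\<^bsup>k-2\<^esup> (1 0\<^bsup>k-1\<^esup>)\<^bsup>k-2\<^esup> 1\<close>:
  consecutive ones are \<open>k\<close> apart, except for the two gaps of \<open>k - 1\<close> around the centre.\<close>
definition lower_word :: "nat \<Rightarrow> nat \<Rightarrow> nat" where
  "lower_word k x =
     (if (x < centre k \<and> k dvd x) \<or> x = centre k \<or> (centre k < x \<and> k dvd x + 2) then 1 else 0)"

lemma lower_word_eq_1_iff:
  "lower_word k x = 1 \<longleftrightarrow> (x < centre k \<and> k dvd x) \<or> x = centre k \<or> (centre k < x \<and> k dvd x + 2)"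
  by (simp add: lower_word_def)

lemma lower_word_neq_1: "lower_word k x \<noteq> 1 \<Longrightarrow> lower_word k x = 0"
  by (simp add: lower_word_def split: if_splits)

context
  fixes k :: nat
  assumes k4: "4 \<le> k"
begin

lemma centre_Suc: "centre k + 1 = k * (k - 1)"
proof -
  have "k * (k - 1) = k * k - k" by (simp add: diff_mult_distrib2)
  moreover have "4 * k \<le> k * k" using k4 by simp
  ultimately show ?thesis unfolding centre_def using k4 by linarith
qed

lemma dvd_centre_Suc: "k dvd centre k + 1"
  using centre_Suc by (metis dvd_triv_left)

lemma dvd_less_double_eq: "k dvd t \<Longrightarrow> 0 < t \<Longrightarrow> t < 2 * k \<Longrightarrow> t = k"
  using dvd_between_multiples_eq[of k t 0] by simp

lemma lower_word_close_ones_left: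
  assumes "x < centre k" "k dvd x" and y: "lower_word k y = 1"
    and "x < y" and close: "y - x + 3 \<le> 2 * k"
  shows "(y - x = k \<and> y < centre k) \<or> (y - x = k - 1 \<and> y = centre k)"
proof -
  let ?X = "centre k" and ?d = "y - x"
  have gap: "k dvd x + t \<Longrightarrow> k dvd t" for t using \<open>k dvd x\<close> by (simp add: dvd_add_right_iff)
  consider "y < ?X" "k dvd y" | "y = ?X" | "?X < y" "k dvd y + 2"
    using y unfolding lower_word_eq_1_iff by blast
  then show ?thesis
  proof cases
    case 1
    have "k dvd x + ?d" using \<open>k dvd y\<close> \<open>x < y\<close> by simp
    then have "k dvd ?d" by (rule gap)
    then show ?thesis using dvd_less_double_eq close \<open>x < y\<close> 1 by simp
  next
    case 2
    have "k dvd x + (?d + 1)" using dvd_centre_Suc 2 \<open>x < y\<close> by simp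
    then have "k dvd ?d + 1" by (rule gap)
    then show ?thesis using dvd_less_double_eq[of "?d + 1"] close 2 by simp
  next
    case 3
    have "k dvd x + (?d + 2)" using 3 \<open>x < y\<close> by simp
    then have "k dvd ?d + 2" by (rule gap)
    then have "?d + 2 = k" using dvd_less_double_eq close by simp
    moreover have "k * (k - 1) = k * (k - 2) + k"
      using k4 mult_eq_mult_pred_plus[of "k - 1" k] by simp
    ultimately have "k * (k - 2) < x" "x < k * (k - 2) + 2 * k"
      using 3 \<open>x < ?X\<close> centre_Suc by linarith+
    then have "x = k * (k - 2) + k" by (rule dvd_between_multiples_eq[OF \<open>k dvd x\<close>])
    then show ?thesis using \<open>k * (k - 1) = k * (k - 2) + k\<close> \<open>x < ?X\<close> centre_Suc by simp
  qed
qed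

lemma lower_word_close_ones:
  assumes x: "lower_word k x = 1" and y: "lower_word k y = 1"
    and "x < y" and close: "y - x + 3 \<le> 2 * k"
  shows "(y - x = k \<and> (y < centre k \<or> centre k < x)) \<or>
    (y - x = k - 1 \<and> (x = centre k \<or> y = centre k))"
proof -
  let ?X = "centre k" and ?d = "y - x"
  consider "x < ?X" "k dvd x" | "x = ?X" | "?X < x" "k dvd x + 2"
    using x unfolding lower_word_eq_1_iff by blast
  then show ?thesis
  proof cases
    case 1
    then show ?thesis using lower_word_close_ones_left[OF 1 y \<open>x < y\<close> close] by blast
  next
    case 2
    then have "k dvd y + 2" using y \<open>x < y\<close> unfolding lower_word_eq_1_iff by auto
    then have "k dvd (?X + 1) + (?d + 1)" using 2 \<open>x < y\<close> by simp
    then have "k dvd ?d + 1" using dvd_centre_Suc dvd_add_right_iff by blast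
    then show ?thesis using dvd_less_double_eq[of "?d + 1"] close 2 by simp
  next
    case 3
    then have "k dvd y + 2" using y \<open>x < y\<close> unfolding lower_word_eq_1_iff by auto
    then have "k dvd (x + 2) + ?d" using \<open>x < y\<close> by simp
    then have "k dvd ?d" using 3 dvd_add_right_iff by blast
    then show ?thesis using dvd_less_double_eq close \<open>x < y\<close> 3 by simp
  qed
qed

lemma lower_word_ones_apart:
  assumes "lower_word k x = 1" "lower_word k y = 1" "x < y"
  shows "k - 1 \<le> y - x"
  using lower_word_close_ones[OF assms] by (cases "y - x + 3 \<le> 2 * k") auto

lemma lower_word_one_in_window:
  assumes "x + k \<le> 2 * centre k + 1"
  obtains y where "x \<le> y" "y < x + k" "lower_word k y = 1"
proof -
  have "0 < k" using k4 by simp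
  consider "x + k \<le> centre k" | "x \<le> centre k" "centre k < x + k" | "centre k < x" by linarith
  then show thesis
  proof cases
    case 1
    obtain q where "x \<le> k * q" "k * q < x + k" using exists_multiple_between[OF \<open>0 < k\<close>] by blast
    then show thesis using 1 that[of "k * q"] unfolding lower_word_eq_1_iff by simp
  next
    case 2
    then show thesis using that[of "centre k"] unfolding lower_word_eq_1_iff by simp
  next
    case 3
    obtain q where q: "x + 2 \<le> k * q" "k * q < x + 2 + k"
      using exists_multiple_between[OF \<open>0 < k\<close>] by blast
    define y where "y = k * q - 2"
    have "y + 2 = k * q" using q by (simp add: y_def)
    then have "x \<le> y" "y < x + k" "k dvd y + 2" using q by simp_all
    then show thesis using 3 that[of y] unfolding lower_word_eq_1_iff by simp
  qed
qed

lemma lower_word_shift_left: "x + D < centre k \<Longrightarrow> k dvd D \<Longrightarrow> lower_word k (x + D) = lower_word k x"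
  unfolding lower_word_def by (auto simp: dvd_add_left_iff)

lemma lower_word_shift_right:
  assumes "centre k < x" "k dvd D"
  shows "lower_word k (x + D) = lower_word k x"
proof -
  have "k dvd x + D + 2 \<longleftrightarrow> k dvd x + 2"
    using assms(2) by (metis add.commute add.left_commute dvd_add_right_iff)
  then show ?thesis using assms(1) unfolding lower_word_def by auto
qed

lemma lower_word_shift_across:
  assumes "x < centre k" "centre k < x + D" "k dvd D + 2"
  shows "lower_word k (x + D) = lower_word k x"
proof -
  have "k dvd x + D + 2 \<longleftrightarrow> k dvd x"
    using assms(3) by (metis add.assoc dvd_add_left_iff)
  then show ?thesis using assms(1,2) unfolding lower_word_def by auto
qed

lemma lower_word_near_centre:
  assumes "centre k + 3 \<le> y + 2 * k" "y + 3 \<le> centre k + 2 * k"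
  shows "lower_word k y = 1 \<longleftrightarrow> y + (k - 1) = centre k \<or> y = centre k \<or> y = centre k + (k - 1)"
proof -
  let ?X = "centre k"
  have k1: "k * (k - 1) = k * (k - 2) + k" "k * k = k * (k - 1) + k"
    using k4 mult_eq_mult_pred_plus[of "k - 1" k] mult_eq_mult_pred_plus[of k k] by simp_all
  have left: "y < ?X \<and> k dvd y \<longleftrightarrow> y + (k - 1) = ?X"
  proof
    assume "y < ?X \<and> k dvd y"
    moreover have "k * (k - 3) + k = k * (k - 2)"
      using k4 mult_eq_mult_pred_plus[of "k - 2" k] by simp
    ultimately have "k dvd y" "k * (k - 3) < y" "y < k * (k - 3) + 2 * k"
      using assms centre_Suc k1 by linarith+
    then have "y = k * (k - 3) + k" by (rule dvd_between_multiples_eq)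
    then show "y + (k - 1) = ?X" using centre_Suc k1 \<open>k * (k - 3) + k = k * (k - 2)\<close> k4 by simp
  next
    assume "y + (k - 1) = ?X"
    then have "y = k * (k - 2)" using centre_Suc k1 k4 by simp
    then show "y < ?X \<and> k dvd y" using \<open>y + (k - 1) = ?X\<close> k4 by simp
  qed
  have right: "?X < y \<and> k dvd y + 2 \<longleftrightarrow> y = ?X + (k - 1)"
  proof
    assume "?X < y \<and> k dvd y + 2"
    then have "k dvd y + 2" "k * (k - 1) < y + 2" "y + 2 < k * (k - 1) + 2 * k"
      using assms centre_Suc by linarith+
    then have "y + 2 = k * (k - 1) + k" by (rule dvd_between_multiples_eq)
    then show "y = ?X + (k - 1)" using centre_Suc k1 k4 by simp
  next
    assume "y = ?X + (k - 1)"
    then have "y + 2 = k * k" using centre_Suc k1 k4 by simp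
    then show "?X < y \<and> k dvd y + 2" using \<open>y = ?X + (k - 1)\<close> k4 by simp
  qed
  show ?thesis using left right unfolding lower_word_eq_1_iff by blast
qed

lemma lower_word_shift_centre:
  assumes "centre k + 3 \<le> x + 2 * k" "x + 2 \<le> centre k + k"
  shows "lower_word k (x + (k - 1)) = lower_word k x"
proof -
  have "lower_word k x = 1 \<longleftrightarrow> lower_word k (x + (k - 1)) = 1"
    using lower_word_near_centre[of x] lower_word_near_centre[of "x + (k - 1)"] assms k4 by linarith
  then show ?thesis using lower_word_neq_1 by metis
qed

lemma lower_word_short_block:
  assumes "m \<le> k - 1"
  obtains \<tau> where "\<tau> \<le> m" "\<And>q. q < m \<Longrightarrow> lower_word k (t + q) = (if q = \<tau> then 1 else 0)"
proof (cases "\<exists>q<m. lower_word k (t + q) = 1")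
  case True
  then obtain \<tau> where \<tau>: "\<tau> < m" "lower_word k (t + \<tau>) = 1" by blast
  have "lower_word k (t + q) = 0" if "q < m" "q \<noteq> \<tau>" for q
  proof (rule lower_word_neq_1, rule notI)
    assume one: "lower_word k (t + q) = 1"
    consider "q < \<tau>" | "\<tau> < q" using \<open>q \<noteq> \<tau>\<close> by linarith
    then show False
    proof cases
      case 1
      then show False using lower_word_ones_apart[OF one \<tau>(2)] \<tau>(1) assms by linarith
    next
      case 2
      then show False using lower_word_ones_apart[OF \<tau>(2) one] \<open>q < m\<close> assms by linarith
    qed
  qed
  then show thesis using that[of \<tau>] \<tau> by auto
next
  case False
  then show thesis using that[of m] lower_word_neq_1 by auto
qed

lemma lower_word_equal_blocks_short:
  assumes "m + 2 \<le> k"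
  obtains r r' where "r < r'" "r' < k"
    "\<And>q. q < m \<Longrightarrow> lower_word k (s + r*m + q) = lower_word k (s + r'*m + q)"
proof -
  let ?R = "\<lambda>r \<tau>. \<forall>q<m. lower_word k (s + r*m + q) = (if q = \<tau> then 1 else 0)"
  have R: "\<exists>\<tau>\<in>{..m}. ?R r \<tau>" for r
  proof -
    have "m \<le> k - 1" using assms by simp
    then obtain \<tau> where "\<tau> \<le> m" "\<And>q. q < m \<Longrightarrow> lower_word k (s + r*m + q) = (if q = \<tau> then 1 else 0)"
      using lower_word_short_block[of m "s + r*m"] by (metis add.assoc)
    then show ?thesis by blast
  qed
  have card: "card {..m} < card {..<k}" using assms by simp
  obtain r r' \<tau> where "r \<in> {..<k}" "r' \<in> {..<k}" "r < r'" "?R r \<tau>" "?R r' \<tau>"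
    by (rule ordered_pigeonhole[OF finite_atMost card R])
  then show thesis using that[of r r'] by simp
qed

lemma lower_word_equal_blocks_pred:
  assumes "s + k * (k - 1) \<le> 2 * centre k + 1"
  obtains r r' where "r < r'" "r' < k"
    "\<And>q. q < k - 1 \<Longrightarrow> lower_word k (s + r*(k - 1) + q) = lower_word k (s + r'*(k - 1) + q)"
proof -
  let ?m = "k - 1" and ?X = "centre k"
  have "s \<le> ?X" using assms centre_Suc by linarith
  then obtain c where c: "s + c * ?m \<le> ?X" "?X < s + c * ?m + ?m"
    using exists_block_index[of ?m s ?X] k4 by auto
  \<comment> \<open>With truncated subtraction this is block 0 when \<open>c = 0\<close>.\<close>
  define r where "r = c - 1"
  have r: "c \<le> r + 1" "r \<le> c" by (simp_all add: r_def)
  have "c * ?m < k * ?m" using c centre_Suc by linarith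
  then have "c < k" by simp
  have "lower_word k (s + (r + 1) * ?m + q) = lower_word k (s + r * ?m + q)" if "q < ?m" for q
  proof -
    have "c * ?m \<le> r * ?m + ?m" "r * ?m \<le> c * ?m"
      using r mult_le_mono1[of c "r + 1" ?m] mult_le_mono1[of r c ?m] by simp_all
    moreover have "?m + 1 = k" using k4 by simp
    ultimately have "?X + 3 \<le> s + r * ?m + q + 2 * k" "s + r * ?m + q + 2 \<le> ?X + k"
      using c that by linarith+
    then have "lower_word k (s + r * ?m + q + ?m) = lower_word k (s + r * ?m + q)"
      by (rule lower_word_shift_centre)
    moreover have "s + (r + 1) * ?m + q = s + r * ?m + q + ?m" by simp
    ultimately show ?thesis by (simp only:)
  qed
  moreover have "r + 1 < k" using \<open>c < k\<close> k4 by (simp add: r_def)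
  ultimately show thesis using that[of r "r + 1"] by simp
qed

lemma lower_word_centre_block:
  assumes "k \<le> m" "s + k * m \<le> 2 * centre k + 1"
  obtains c where "1 \<le> c" "c + 2 \<le> k"
    "\<And>r q. r + 1 \<le> c \<Longrightarrow> q < m \<Longrightarrow> s + r * m + q < centre k"
    "\<And>r q. c + 1 \<le> r \<Longrightarrow> centre k < s + r * m + q"
proof -
  let ?X = "centre k"
  have "k * (k - 1) \<le> (k - 1) * m" using assms(1) by (simp add: mult.commute)
  moreover have "k * m = (k - 1) * m + m"
    using mult_eq_mult_pred_plus[of k m] k4 by (simp add: mult.commute)
  ultimately have "s + m \<le> ?X" "?X < (k - 1) * m"
    using assms(2) centre_Suc by linarith+
  then obtain c where c: "s + c * m \<le> ?X" "?X < s + c * m + m"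
    using exists_block_index[of m s ?X] assms(1) k4 by auto
  show thesis
  proof
    show "1 \<le> c" using c \<open>s + m \<le> ?X\<close> by (cases c) auto
    have "c * m < (k - 1) * m" using c \<open>?X < (k - 1) * m\<close> by linarith
    then have "c < k - 1" by simp
    then show "c + 2 \<le> k" by linarith
  next
    fix r q assume "r + 1 \<le> c" "q < m"
    then have "r * m + m \<le> c * m" using mult_le_mono1[of "r + 1" c m] by simp
    then show "s + r * m + q < ?X" using c \<open>q < m\<close> by linarith
  next
    fix r q :: nat assume "c + 1 \<le> r"
    then have "c * m + m \<le> r * m" using mult_le_mono1[of "c + 1" r m] by simp
    then show "?X < s + r * m + q" using c by linarith
  qed
qed

lemma lower_word_equal_blocks_long:
  assumes "k \<le> m" and win: "s + k * m \<le> 2 * centre k + 1"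
  obtains r r' where "r < r'" "r' < k"
    "\<And>q. q < m \<Longrightarrow> lower_word k (s + r*m + q) = lower_word k (s + r'*m + q)"
proof -
  let ?X = "centre k"
  obtain c where "1 \<le> c" "c + 2 \<le> k"
    and left: "\<And>r q. r + 1 \<le> c \<Longrightarrow> q < m \<Longrightarrow> s + r * m + q < ?X"
    and right: "\<And>r q. c + 1 \<le> r \<Longrightarrow> ?X < s + r * m + q"
    using lower_word_centre_block[OF assms] by blast
  have "k * m < k * (2 * k - 2)" using win centre_Suc by (simp add: diff_mult_distrib2)
  then have "m < 2 * k - 2" by simp
  then have "m + 3 \<le> 2 * k" by linarith
  have shifted: "s + (r + d) * m + q = (s + r * m + q) + d * m" for r d q
    by (simp add: algebra_simps)
  show thesis
  proof (rule exists_block_shift[OF k4 \<open>k \<le> m\<close> \<open>m + 3 \<le> 2 * k\<close>])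
    fix d assume d: "k dvd d * m" "1 \<le> d" "2 * d + 2 \<le> k"
    show thesis
    proof (cases "d + 1 \<le> c")
      case True
      have "lower_word k (s + 0 * m + q) = lower_word k (s + (0 + d) * m + q)" if "q < m" for q
        using lower_word_shift_left[OF _ d(1), of "s + q"] left[OF True that] by (simp add: add_ac)
      then show thesis using that[of 0 d] d by simp
    next
      case False
      have "lower_word k (s + (c + 1) * m + q) = lower_word k (s + (c + 1 + d) * m + q)" for q
        using lower_word_shift_right[OF right[OF order_refl, of q] d(1)]
        unfolding shifted by (rule sym)
      moreover have "c + 1 + d < k" using False d by linarith
      ultimately show thesis using that[of "c + 1" "c + 1 + d"] d by simp
    qed
  next
    fix d assume d: "k dvd d * m + 2" "2 \<le> d" "d < k"
    obtain r where r: "r + 1 \<le> c" "c + 1 \<le> r + d" "r + d < k"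
      using exists_straddling_pair \<open>1 \<le> c\<close> \<open>c + 2 \<le> k\<close> d(2,3) by blast
    have "lower_word k (s + r * m + q) = lower_word k (s + (r + d) * m + q)" if "q < m" for q
    proof -
      have "?X < (s + r * m + q) + d * m" using right[OF r(2), of q] unfolding shifted .
      from lower_word_shift_across[OF left[OF r(1) that] this d(1)] show ?thesis
        unfolding shifted by (rule sym)
    qed
    then show thesis using that[of r "r + d"] r d by simp
  qed
qed

lemma lower_word_equal_blocks:
  assumes "s + k * m \<le> 2 * centre k + 1"
  obtains r r' where "r < r'" "r' < k"
    "\<And>q. q < m \<Longrightarrow> lower_word k (s + r*m + q) = lower_word k (s + r'*m + q)"
proof -
  consider "m + 2 \<le> k" | "m = k - 1" | "k \<le> m" by linarith
  then show thesis
  proof cases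
    case 1
    then show thesis using lower_word_equal_blocks_short that by blast
  next
    case 2
    then show thesis using lower_word_equal_blocks_pred assms that by blast
  next
    case 3
    then show thesis using lower_word_equal_blocks_long assms that by blast
  qed
qed

lemma lower_word_periodic_ones:
  assumes "0 < p" "s + k * p \<le> 2 * centre k + 1"
    and per: "\<And>q. q < k * p \<Longrightarrow> lower_word k (s + q) = lower_word k (s + q mod p)"
  obtains b where "b + (k - 1) * p < s + k * p" "\<And>i. i < k \<Longrightarrow> lower_word k (b + i * p) = 1"
proof -
  have kp: "k * p = (k - 1) * p + p"
    using mult_eq_mult_pred_plus[of k p] k4 by (simp add: mult.commute)
  have "k \<le> k * p" using \<open>0 < p\<close> by simp
  then have "s + k \<le> 2 * centre k + 1" using assms(2) by linarith
  then obtain y where y: "s \<le> y" "y < s + k" "lower_word k y = 1"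
    by (rule lower_word_one_in_window)
  define b where "b = s + (y - s) mod p"
  have "(y - s) mod p < p" using \<open>0 < p\<close> by simp
  then have last: "b + (k - 1) * p < s + k * p" using kp by (simp add: b_def)
  have "y - s < k * p" using y \<open>k \<le> k * p\<close> by linarith
  have "lower_word k (b + i * p) = 1" if "i < k" for i
  proof -
    have "i * p \<le> (k - 1) * p" using that by (intro mult_le_mono1) simp
    then have "(y - s) mod p + i * p < k * p" using \<open>(y - s) mod p < p\<close> kp by linarith
    then have "lower_word k (b + i * p) = lower_word k (s + (y - s) mod p)"
      using per[of "(y - s) mod p + i * p"] by (simp add: b_def add.assoc)
    also have "\<dots> = lower_word k y" using per[OF \<open>y - s < k * p\<close>] y by simp
    finally show ?thesis using y by simp
  qed
  then show thesis using that last by blast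
qed

lemma lower_word_not_periodic:
  assumes "0 < p" and win: "s + k * p \<le> 2 * centre k + 1"
    and per: "\<And>q. q < k * p \<Longrightarrow> lower_word k (s + q) = lower_word k (s + q mod p)"
  shows False
proof -
  let ?X = "centre k"
  obtain b where last: "b + (k - 1) * p < s + k * p"
    and ones: "\<And>i. i < k \<Longrightarrow> lower_word k (b + i * p) = 1"
    using lower_word_periodic_ones[OF assms] by blast
  have "k * p < k * (2 * k - 2)" using win centre_Suc by (simp add: diff_mult_distrib2)
  then have "p < 2 * k - 2" by simp
  have gap: "(p = k \<and> (b + (i + 1) * p < ?X \<or> ?X < b + i * p)) \<or>
      (p = k - 1 \<and> (b + i * p = ?X \<or> b + (i + 1) * p = ?X))"
    if "i + 1 < k" for i
    using lower_word_close_ones[OF ones ones, of i "i + 1"] that \<open>0 < p\<close> \<open>p < 2 * k - 2\<close> by simp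
  show False
  proof (cases "p = k")
    case True
    have "(k - 1) * k = ?X + 1" using centre_Suc by (simp add: mult.commute)
    from last win have "b + (k - 1) * k < s + k * k" "s + k * k \<le> 2 * ?X + 1"
      unfolding \<open>p = k\<close> by blast+
    show False
    proof (cases "?X < b")
      case True
      then show False
        using \<open>b + (k - 1) * k < s + k * k\<close> \<open>s + k * k \<le> 2 * ?X + 1\<close> \<open>(k - 1) * k = ?X + 1\<close>
        by linarith
    next
      case False
      then obtain i where i: "i < k - 1" "b + i * k \<le> ?X" "?X < b + (i + 1) * k"
        using exists_crossing_index[of "\<lambda>i. b + i * k" ?X "k - 1"] \<open>(k - 1) * k = ?X + 1\<close> by auto
      then have "i + 1 < k" by simp
      from gap[OF this] have "b + (i + 1) * k < ?X \<or> ?X < b + i * k" using \<open>p = k\<close> k4 by auto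
      then show False using i by linarith
    qed
  next
    case False
    then have "p = k - 1" "b = ?X \<or> b + p = ?X" "b + 2 * p = ?X \<or> b + 3 * p = ?X"
      using gap[of 0] gap[of 2] k4 by (auto simp: numeral_eq_Suc)
    then show False using \<open>0 < p\<close> by linarith
  qed
qed

lemma lower_word_window_not_k_power:
  assumes win: "s + length v \<le> 2 * centre k + 1"
    and v_nth: "\<And>q. q < length v \<Longrightarrow> v ! q = lower_word k (s + q)"
  shows "\<not> is_k_power k v"
proof
  assume "is_k_power k v"
  moreover have "0 < k" using k4 by simp
  ultimately have "\<exists>p>0. length v = k * p \<and> (\<forall>q<length v. v ! q = v ! (q mod p))"
    by (simp only: is_k_power_iff_periodic)
  then obtain p where "0 < p" and len: "length v = k * p"
    and per: "\<forall>q<length v. v ! q = v ! (q mod p)" by blast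
  have periodic: "lower_word k (s + q) = lower_word k (s + q mod p)" if "q < k * p" for q
  proof -
    have "q mod p < length v" using that len mod_less_eq_dividend[of q p] by linarith
    have "lower_word k (s + q) = v ! q" using v_nth[of q] that len by simp
    also have "\<dots> = v ! (q mod p)" by (rule per[rule_format]) (use that len in simp)
    also have "\<dots> = lower_word k (s + q mod p)" by (rule v_nth) fact
    finally show ?thesis .
  qed
  have "s + k * p \<le> 2 * centre k + 1" using win len by simp
  from lower_word_not_periodic[OF \<open>0 < p\<close> this periodic] show False .
qed

lemma lower_word_window_not_k_anti_power:
  assumes win: "s + length v \<le> 2 * centre k + 1"
    and v_nth: "\<And>q. q < length v \<Longrightarrow> v ! q = lower_word k (s + q)"
  shows "\<not> is_k_anti_power k v"
proof
  assume "is_k_anti_power k v"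
  then obtain m where len: "length v = k * m"
    and distinct: "\<forall>i j. i < j \<longrightarrow> j < k \<longrightarrow> (\<exists>t<m. v ! (i*m + t) \<noteq> v ! (j*m + t))"
    unfolding is_k_anti_power_iff_blocks by blast
  have "s + k * m \<le> 2 * centre k + 1" using win len by simp
  then obtain r r' where "r < r'" "r' < k"
    and equal: "\<And>q. q < m \<Longrightarrow> lower_word k (s + r*m + q) = lower_word k (s + r'*m + q)"
    by (rule lower_word_equal_blocks) blast
  obtain t where "t < m" "v ! (r*m + t) \<noteq> v ! (r'*m + t)" using distinct \<open>r < r'\<close> \<open>r' < k\<close> by blast
  moreover have "r*m + t < length v" "r'*m + t < length v"
    using \<open>t < m\<close> \<open>r < r'\<close> \<open>r' < k\<close> len mult_le_mono1[of "Suc r'" k m] mult_le_mono1[of "Suc r" k m]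
    by simp_all
  ultimately show False using equal[OF \<open>t < m\<close>] v_nth[of "r*m + t"] v_nth[of "r'*m + t"]
    by (simp add: add.assoc)
qed

end

lemma not_good_length_lower:
  assumes "4 \<le> k" "2 \<le> alpha" "N < 2 * k^2 - 2 * k"
  shows "\<not> good_length alpha k N"
proof
  assume "good_length alpha k N"
  define w where "w = map (lower_word k) [0..<N]"
  have "length w = N" "set w \<subseteq> {0..<alpha}" using assms(2) by (auto simp: w_def lower_word_def)
  then obtain v where "is_factor v w" and v: "is_k_power k v \<or> is_k_anti_power k v"
    using \<open>good_length alpha k N\<close> unfolding good_length_def by blast
  obtain s where "s + length v \<le> N" and w_nth: "\<And>q. q < length v \<Longrightarrow> v ! q = w ! (s + q)"
    using \<open>is_factor v w\<close> \<open>length w = N\<close> by (metis is_factor_nth)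
  then have v_nth: "v ! q = lower_word k (s + q)" if "q < length v" for q
    using that by (simp add: w_def)
  have "2 * k^2 - 2 * k = 2 * (k * (k - 1))" by (simp add: power2_eq_square diff_mult_distrib2)
  then have win: "s + length v \<le> 2 * centre k + 1"
    using \<open>s + length v \<le> N\<close> assms(3) centre_Suc[OF assms(1)] by linarith
  show False
    using v lower_word_window_not_k_power[OF assms(1) win v_nth]
      lower_word_window_not_k_anti_power[OF assms(1) win v_nth] by blast
qed

theorem theorem5p1:
  fixes alpha k :: nat
  assumes "alpha \<ge> 2" and "k > 3"
  shows "(\<exists>N>0. good_length alpha k N) \<and>
         2*k^2 - 2*k \<le> N_alpha alpha k \<and>
         N_alpha alpha k \<le> (k^3 - k^2 + k) * (k choose 2)"
proof -
  define N where "N = (k^3 - k^2 + k) * (k choose 2)"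
  have "0 < k^3 - k^2 + k" using assms(2) by (intro trans_less_add2) simp
  moreover have "0 < k choose 2" using assms(2) by simp
  ultimately have good: "0 < N \<and> good_length alpha k N"
    unfolding N_def using good_length_upper by (blast intro: mult_pos_pos)
  then have "0 < N_alpha alpha k \<and> good_length alpha k (N_alpha alpha k)" "N_alpha alpha k \<le> N"
    unfolding N_alpha_def by (rule LeastI, rule Least_le)
  moreover have "4 \<le> k" using assms(2) by simp
  ultimately have "2*k^2 - 2*k \<le> N_alpha alpha k"
    using not_good_length_lower[of k alpha "N_alpha alpha k"] assms(1) by (meson not_less)
  then show ?thesis using good \<open>N_alpha alpha k \<le> N\<close> unfolding N_def by blast
qed

end
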